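(* Let $\hat H,\hat H'$ be $p\times p$ transfer functions. Then $\hat H\sim\hat H'$ (shift equivalence) if and only if all of the following hold: (1) $\hat H_{ii}=\hat H'_{ii}$ for all $i$; (2) for all $i\neq j$, $\hat H_{ij}=0$ if and only if $\hat H'_{ij}=0$; (3) for all $i\ne j$ with $\hat H_{ij}\neq0$ there is an integer $b_{ij}$ with $\hat H'_{ij}(z)/\hat H_{ij}(z)=z^{b_{ij}}$; (4) the linear system $b_{ij}=m_j-m_i$ for all $i\neq j$ with $\hat H_{ij}\ne0$ has a solution $m\in\mathbb{R}^p$. Moreover, whenever this system has a real solution it has an integer solution.
   Context: For nonnegative integers $m=(m_1,\dots,m_p)$, the multi-shift is $\hat\Delta_m(z)=\mathrm{diag}(z^{-m_1},\dots,z^{-m_p})$. Two $p\times p$ transfer functions (matrices of rational functions of $z$) are shift-equivalent, $\hat H_1\sim\hat H_2$, if there is a multi-shift $\hat\Delta_m$ with $\hat H_1=\hat\Delta_m\hat H_2\hat\Delta_m^{-1}$. *)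

theory Defs
  imports "HOL-Analysis.Analysis" "HOL-Computational_Algebra.Fraction_Field"
          "HOL-Computational_Algebra.Polynomial"
begin

type_synonym ratfun = "real poly fract"

definition zvar :: ratfun where
  "zvar = Fract [:0, 1:] 1"

text \<open>p x p transfer functions: matrices indexed by a finite type 'n (p = CARD('n)).\<close>
type_synonym 'n transfer = "ratfun ^ 'n ^ 'n"

definition multishift :: "('n::finite \<Rightarrow> nat) \<Rightarrow> 'n transfer" where
  "multishift m = (\<chi> i j. if i = j then zvar powi (- int (m i)) else 0)"

definition shift_equiv :: "'n::finite transfer \<Rightarrow> 'n transfer \<Rightarrow> bool" (infix \<open>\<sim>\<^sub>s\<close> 50) where
  "H1 \<sim>\<^sub>s H2 \<longleftrightarrow>
     (\<exists>m. H1 = multishift m ** H2 ** matrix_inv (multishift m))"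

end

theory Submission
  imports Defs
begin

text \<open>A multi-shift is an invertible diagonal matrix, so conjugating by it multiplies the
  entry (i, j) by z^(m_j - m_i). Hence shift equivalence fixes the diagonal and the zero
  pattern, and forces every nonzero off-diagonal quotient to be a power of z whose exponents
  b_ij are differences of a potential. Conversely, such exponents are realised by a multi-shift:
  a real potential m yields the integer potential \<lfloor>m\<rfloor> because the b_ij are integers,
  and adding a constant makes it nonnegative without changing the differences.\<close>

definition diag_mat :: "('n::finite \<Rightarrow> 'a::semiring_1) \<Rightarrow> 'a ^ 'n ^ 'n" where
  "diag_mat d = (\<chi> i j. if i = j then d i else 0)"

lemma diag_mat_mult_left_nth: "(diag_mat d ** A) $ i $ j = d i * A $ i $ j"
  by (simp add: diag_mat_def matrix_matrix_mult_def if_distrib if_distribR sum.delta cong: if_cong)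

lemma diag_mat_mult_right_nth: "(A ** diag_mat d) $ i $ j = A $ i $ j * d j"
  by (simp add: diag_mat_def matrix_matrix_mult_def if_distrib if_distribR sum.delta' cong: if_cong)

lemma diag_mat_mult_diag_mat: "diag_mat d ** diag_mat e = diag_mat (\<lambda>i. d i * e i)"
  by (simp add: vec_eq_iff diag_mat_mult_left_nth) (simp add: diag_mat_def)

lemma diag_mat_one: "diag_mat (\<lambda>i. 1) = mat 1"
  by (simp add: diag_mat_def mat_def vec_eq_iff)

lemma matrix_inv_eqI:
  fixes A :: "'a::semiring_1 ^ 'n ^ 'n"
  assumes "A ** B = mat 1" and "B ** A = mat 1"
  shows "matrix_inv A = B"
proof -
  let ?A' = "matrix_inv A"
  have "A ** ?A' = mat 1"
    unfolding matrix_inv_def by (rule someI2[where a = B]) (use assms in auto)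
  then have "B ** (A ** ?A') = B"
    by simp
  then show ?thesis
    by (simp add: matrix_mul_assoc assms(2))
qed

lemma matrix_inv_diag_mat:
  fixes d :: "'n::finite \<Rightarrow> 'a::field"
  assumes "\<And>i. d i \<noteq> 0"
  shows "matrix_inv (diag_mat d) = diag_mat (\<lambda>i. inverse (d i))"
  by (rule matrix_inv_eqI) (simp_all add: diag_mat_mult_diag_mat assms diag_mat_one)

lemma zvar_nonzero [simp]: "zvar \<noteq> 0"
  by (simp add: zvar_def Zero_fract_def eq_fract)

lemma multishift_conj_nth:
  "(multishift m ** H ** matrix_inv (multishift m)) $ i $ j
     = zvar powi (int (m j) - int (m i)) * H $ i $ j"
proof -
  have shift: "multishift m = diag_mat (\<lambda>i. zvar powi (- int (m i)))"
    by (simp add: multishift_def diag_mat_def)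
  have "matrix_inv (multishift m) = diag_mat (\<lambda>i. zvar powi (int (m i)))"
    unfolding shift by (subst matrix_inv_diag_mat) (simp_all add: power_int_minus)
  then show ?thesis
    unfolding shift
    by (simp add: diag_mat_mult_left_nth diag_mat_mult_right_nth power_int_diff power_int_minus
        field_simps)
qed

lemma shift_equiv_iff_nth:
  "H \<sim>\<^sub>s H' \<longleftrightarrow>
     (\<exists>m. \<forall>i j. H $ i $ j = zvar powi (int (m j) - int (m i)) * H' $ i $ j)"
  unfolding shift_equiv_def by (simp add: vec_eq_iff multishift_conj_nth)

lemma shift_equivD:
  fixes H H' :: "'n::finite transfer"
  assumes "H \<sim>\<^sub>s H'"
  obtains k :: "'n \<Rightarrow> int" where
    "\<And>i. H $ i $ i = H' $ i $ i"
    "\<And>i j. H $ i $ j = 0 \<longleftrightarrow> H' $ i $ j = 0"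
    "\<And>i j. H $ i $ j \<noteq> 0 \<Longrightarrow> H' $ i $ j / H $ i $ j = zvar powi (k j - k i)"
proof -
  from assms obtain m :: "'n \<Rightarrow> nat"
    where H: "\<And>i j. H $ i $ j = zvar powi (int (m j) - int (m i)) * H' $ i $ j"
    unfolding shift_equiv_iff_nth by blast
  show thesis
  proof
    show "H $ i $ i = H' $ i $ i" for i
      by (simp add: H)
    show "H $ i $ j = 0 \<longleftrightarrow> H' $ i $ j = 0" for i j
      by (simp add: H)
    show "H' $ i $ j / H $ i $ j = zvar powi (- int (m j) - - int (m i))"
      if "H $ i $ j \<noteq> 0" for i j
      using that by (simp add: H power_int_diff field_simps)
  qed
qed

lemma real_potential_imp_int_potential:
  fixes b :: "'a \<Rightarrow> 'a \<Rightarrow> int" and m :: "'a \<Rightarrow> real"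
  assumes "\<forall>i j. P i j \<longrightarrow> real_of_int (b i j) = m j - m i"
  shows "\<exists>k :: 'a \<Rightarrow> int. \<forall>i j. P i j \<longrightarrow> b i j = k j - k i"
proof (intro exI allI impI)
  fix i j
  assume "P i j"
  with assms have "m j = m i + of_int (b i j)"
    by simp
  then have "\<lfloor>m j\<rfloor> = \<lfloor>m i\<rfloor> + b i j"
    by simp
  then show "b i j = \<lfloor>m j\<rfloor> - \<lfloor>m i\<rfloor>"
    by simp
qed

lemma nat_fun_same_differences:
  fixes k :: "'a::finite \<Rightarrow> int"
  obtains m :: "'a \<Rightarrow> nat" where "\<And>i j. int (m j) - int (m i) = k j - k i"
proof
  define c where "c = Min (range k)"
  have "c \<le> k i" for i
    unfolding c_def by simp
  then show "int (nat (k j - c)) - int (nat (k i - c)) = k j - k i" for i j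
    by simp
qed

lemma shift_equivI:
  fixes H H' :: "'n::finite transfer" and b :: "'n \<Rightarrow> 'n \<Rightarrow> int" and m :: "'n \<Rightarrow> real"
  assumes diag: "\<forall>i. H $ i $ i = H' $ i $ i"
    and zero: "\<forall>i j. i \<noteq> j \<longrightarrow> (H $ i $ j = 0 \<longleftrightarrow> H' $ i $ j = 0)"
    and quot: "\<forall>i j. i \<noteq> j \<and> H $ i $ j \<noteq> 0 \<longrightarrow> H' $ i $ j / H $ i $ j = zvar powi (b i j)"
    and potential: "\<forall>i j. i \<noteq> j \<and> H $ i $ j \<noteq> 0 \<longrightarrow> real_of_int (b i j) = m j - m i"
  shows "H \<sim>\<^sub>s H'"
proof -
  obtain k :: "'n \<Rightarrow> int" where k: "\<forall>i j. i \<noteq> j \<and> H $ i $ j \<noteq> 0 \<longrightarrow> b i j = k j - k i"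
    using real_potential_imp_int_potential[OF potential] by blast
  obtain s :: "'n \<Rightarrow> nat" where s: "\<And>i j. int (s j) - int (s i) = k i - k j"
    using nat_fun_same_differences[of "\<lambda>i. - k i"] by auto
  have "H $ i $ j = zvar powi (int (s j) - int (s i)) * H' $ i $ j" for i j
  proof (cases "i = j \<or> H $ i $ j = 0")
    case True
    then show ?thesis
      using diag zero by (cases "i = j") auto
  next
    case False
    then have "H' $ i $ j / H $ i $ j = zvar powi (int (s i) - int (s j))"
      using quot k s by simp
    with False show ?thesis
      by (simp add: power_int_diff field_simps)
  qed
  then show ?thesis
    unfolding shift_equiv_iff_nth by blast
qed

theorem mainTheorem12:
  fixes H H' :: "'n::finite transfer"
  shows "(H \<sim>\<^sub>s H' \<longleftrightarrow>
           (\<forall>i. H $ i $ i = H' $ i $ i) \<and>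
           (\<forall>i j. i \<noteq> j \<longrightarrow> (H $ i $ j = 0 \<longleftrightarrow> H' $ i $ j = 0)) \<and>
           (\<exists>b :: 'n \<Rightarrow> 'n \<Rightarrow> int.
              (\<forall>i j. i \<noteq> j \<and> H $ i $ j \<noteq> 0 \<longrightarrow>
                     H' $ i $ j / H $ i $ j = zvar powi (b i j)) \<and>
              (\<exists>m :: 'n \<Rightarrow> real. \<forall>i j. i \<noteq> j \<and> H $ i $ j \<noteq> 0 \<longrightarrow>
                     real_of_int (b i j) = m j - m i)))
         \<and>
         (\<forall>b :: 'n \<Rightarrow> 'n \<Rightarrow> int.
            (\<exists>m :: 'n \<Rightarrow> real. \<forall>i j. i \<noteq> j \<and> H $ i $ j \<noteq> 0 \<longrightarrow>
                     real_of_int (b i j) = m j - m i) \<longrightarrow>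
            (\<exists>m :: 'n \<Rightarrow> int. \<forall>i j. i \<noteq> j \<and> H $ i $ j \<noteq> 0 \<longrightarrow>
                     b i j = m j - m i))"
  apply (rule conjI[OF iffI])
  subgoal premises equiv
  proof -
    obtain k :: "'n \<Rightarrow> int" where
      diag: "\<And>i. H $ i $ i = H' $ i $ i" and zero: "\<And>i j. H $ i $ j = 0 \<longleftrightarrow> H' $ i $ j = 0"
      and quot: "\<And>i j. H $ i $ j \<noteq> 0 \<Longrightarrow> H' $ i $ j / H $ i $ j = zvar powi (k j - k i)"
      using shift_equivD[OF equiv] by blast
    show ?thesis
    proof (intro conjI exI)
      show "\<forall>i. H $ i $ i = H' $ i $ i"
        using diag by blast
      show "\<forall>i j. i \<noteq> j \<longrightarrow> (H $ i $ j = 0 \<longleftrightarrow> H' $ i $ j = 0)"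
        using zero by blast
      show "\<forall>i j. i \<noteq> j \<and> H $ i $ j \<noteq> 0 \<longrightarrow> H' $ i $ j / H $ i $ j = zvar powi (k j - k i)"
        using quot by blast
      show "\<forall>i j. i \<noteq> j \<and> H $ i $ j \<noteq> 0 \<longrightarrow>
              real_of_int (k j - k i) = real_of_int (k j) - real_of_int (k i)"
        by simp
    qed
  qed
  subgoal
    by (elim conjE exE) (rule shift_equivI)
  subgoal
    by (intro allI impI, elim exE)
      (rule real_potential_imp_int_potential[where P = "\<lambda>i j. i \<noteq> j \<and> H $ i $ j \<noteq> 0"])
  done

end
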